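(* Let $p$ be an odd prime, $a,m\in\mathbb Z_p$ with $m\not\equiv0\pmod p$ and $a\not\equiv0,-1\pmod p$, and put $A_k=\binom ak\binom{-1-a}k\binom{2k}k$. Then $$\sum_{k=0}^{p-1}\frac{A_k}{m^k(2k-1)}\equiv\Big(\frac8m-2\Big)\sum_{k=0}^{p-1}\frac{kA_k}{m^k}-\sum_{k=0}^{p-1}\frac{A_k}{m^k}-\frac{8a(a+1)}m\sum_{k=0}^{p-2}\frac{A_k}{m^k(k+1)}\pmod{p^3}.$$
   Context: $\mathbb Z_p$ denotes the set of rational numbers whose denominator is not divisible by $p$; for $u,v\in\mathbb Z_p$, $u\equiv v\pmod{p^r}$ means $(u-v)/p^r\in\mathbb Z_p$. For $a$ rational, $\binom a0=1$ and $\binom ak=\frac{a(a-1)\cdots(a-k+1)}{k!}$ for $k\ge1$. *)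

theory Defs
  imports Complex_Main "HOL-Computational_Algebra.Primes"
begin

text \<open>Z_p: rationals whose (reduced) denominator is not divisible by p.\<close>
definition in_Zp :: "nat \<Rightarrow> rat \<Rightarrow> bool" where
  "in_Zp p x \<longleftrightarrow> \<not> (int p dvd snd (quotient_of x))"

definition cong_Zp :: "nat \<Rightarrow> nat \<Rightarrow> rat \<Rightarrow> rat \<Rightarrow> bool" where
  "cong_Zp p r u v \<longleftrightarrow> in_Zp p ((u - v) / (of_nat p) ^ r)"

end

theory Submission
  imports Defs
begin

text \<open>The sequence A_k satisfies (k+1)^3 A_{k+1} = -2(2k+1)(a-k)(a+k+1) A_k. With it, the
difference of the two sides, summed up to any N, collapses exactly (over any field of
characteristic 0) to -8 N A_N / m^{N+1}. For N = p - 1 each of the three factors of A_{p-1} is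
divisible by p: the numerator (a)(a-1)...(a-p+2) of binom(a, p-1) contains a - r with r the residue
of a, which lies in 1..p-2 since a is not 0 or -1 mod p; the same holds for -1-a with residue
p-1-r; and p divides binom(2p-2, p-1) since p-1 < p <= 2p-2.\<close>

lemma Suc_times_central_binomial:
  "Suc k * (2 * Suc k choose Suc k) = 2 * (2 * k + 1) * (2 * k choose k)"
proof -
  have "(2 * Suc k choose Suc k) = (Suc (2 * k) choose k) + (Suc (2 * k) choose Suc k)"
    by (simp only: mult_Suc_right add_2_eq_Suc binomial_Suc_Suc)
  also have "(Suc (2 * k) choose k) = (Suc (2 * k) choose Suc k)"
    using binomial_symmetric[of k "Suc (2 * k)"] by simp
  finally have "Suc k * (2 * Suc k choose Suc k) = 2 * (Suc k * (Suc (2 * k) choose Suc k))"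
    by simp
  then show ?thesis by (simp only: Suc_times_binomial) simp
qed

lemma prime_dvd_central_binomial:
  assumes "prime p" "n < p" "p \<le> 2 * n"
  shows "p dvd (2 * n choose n)"
proof -
  have "fact n * fact n * (2 * n choose n) = fact (2 * n)"
    using binomial_fact_lemma[of n "2 * n"] by simp
  moreover have "p dvd fact (2 * n)" "\<not> p dvd fact n * fact n"
    using assms by (auto simp: prime_dvd_fact_iff prime_dvd_mult_iff)
  ultimately show ?thesis
    by (metis assms(1) prime_dvd_mult_iff)
qed

lemma Suc_times_gbinomial_Suc:
  "of_nat (Suc k) * (a gchoose Suc k) = (a - of_nat k) * (a gchoose k)"
  by (metis gbinomial_absorption gbinomial_absorb_comp)

definition binom_triple :: "'a::field_char_0 \<Rightarrow> nat \<Rightarrow> 'a" where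
  "binom_triple a k = (a gchoose k) * ((-1 - a) gchoose k) * of_nat (2 * k choose k)"

lemma binom_triple_Suc:
  "of_nat (Suc k) ^ 3 * binom_triple a (Suc k)
     = -2 * (2 * of_nat k + 1) * (a - of_nat k) * (a + of_nat k + 1) * binom_triple a k"
proof -
  have "of_nat (Suc k) ^ 3 * binom_triple a (Suc k)
      = (of_nat (Suc k) * (a gchoose Suc k)) * (of_nat (Suc k) * ((-1 - a) gchoose Suc k))
        * of_nat (Suc k * (2 * Suc k choose Suc k))"
    unfolding binom_triple_def power3_eq_cube of_nat_mult by (simp only: ac_simps)
  also have "\<dots> = ((a - of_nat k) * (a gchoose k)) * ((-1 - a - of_nat k) * ((-1 - a) gchoose k))
        * (2 * (2 * of_nat k + 1) * of_nat (2 * k choose k))"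
    by (simp only: Suc_times_gbinomial_Suc Suc_times_central_binomial) (simp add: algebra_simps)
  also have "\<dots> = -2 * (2 * of_nat k + 1) * (a - of_nat k) * (a + of_nat k + 1) * binom_triple a k"
    unfolding binom_triple_def by (simp add: algebra_simps)
  finally show ?thesis .
qed

lemma binom_triple_sum_step:
  fixes a m :: "'a::field_char_0" and N :: nat
  assumes "m \<noteq> 0"
  defines "B \<equiv> binom_triple a N" and "B' \<equiv> binom_triple a (Suc N)"
  shows "B' / (m ^ Suc N * (2 * of_nat (Suc N) - 1)) - (8 / m - 2) * (of_nat (Suc N) * B' / m ^ Suc N)
      + B' / m ^ Suc N + 8 * a * (a + 1) / m * (B / (m ^ N * (of_nat N + 1)))
    = -8 * of_nat (Suc N) * B' / m ^ Suc (Suc N) - -8 * of_nat N * B / m ^ Suc N"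
proof -
  define x where "x = (of_nat N :: 'a)"
  have "x + 1 \<noteq> 0" "2 * x + 1 \<noteq> 0"
    using of_nat_neq_0[of N] of_nat_neq_0[of "2 * N"] by (simp_all add: x_def add.commute)
  then have inv: "inverse (x + 1) * (x + 1) = 1" "inverse (2 * x + 1) * (2 * x + 1) = 1"
      "inverse m * m = 1"
    using assms(1) by simp_all
  have rec: "(x + 1) ^ 3 * B' = -2 * (2 * x + 1) * (a - x) * (a + x + 1) * B"
    using binom_triple_Suc[of N a] by (simp add: x_def B_def B'_def add.commute)
  have "2 * (x + 1) - 1 = 2 * x + 1" by simp
  then show ?thesis
    unfolding of_nat_Suc x_def[symmetric] divide_inverse inverse_mult_distrib power_Suc
    using inv rec by algebra
qed

lemma binom_triple_sum_identity:
  fixes a m :: "'a::field_char_0"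
  assumes "m \<noteq> 0"
  shows "(\<Sum>k=0..N. binom_triple a k / (m ^ k * (2 * of_nat k - 1)))
      - ((8 / m - 2) * (\<Sum>k=0..N. of_nat k * binom_triple a k / m ^ k)
         - (\<Sum>k=0..N. binom_triple a k / m ^ k)
         - 8 * a * (a + 1) / m * (\<Sum>k<N. binom_triple a k / (m ^ k * (of_nat k + 1))))
    = -8 * of_nat N * binom_triple a N / m ^ Suc N"
proof (induction N)
  case 0
  then show ?case by (simp add: binom_triple_def)
next
  case (Suc N)
  let ?B = "binom_triple a N" and ?B' = "binom_triple a (Suc N)"
  have "(\<Sum>k=0..Suc N. binom_triple a k / (m ^ k * (2 * of_nat k - 1)))
      - ((8 / m - 2) * (\<Sum>k=0..Suc N. of_nat k * binom_triple a k / m ^ k)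
         - (\<Sum>k=0..Suc N. binom_triple a k / m ^ k)
         - 8 * a * (a + 1) / m * (\<Sum>k<Suc N. binom_triple a k / (m ^ k * (of_nat k + 1))))
    = -8 * of_nat N * ?B / m ^ Suc N
      + (?B' / (m ^ Suc N * (2 * of_nat (Suc N) - 1)) - (8 / m - 2) * (of_nat (Suc N) * ?B' / m ^ Suc N)
         + ?B' / m ^ Suc N + 8 * a * (a + 1) / m * (?B / (m ^ N * (of_nat N + 1))))"
    unfolding Suc.IH[symmetric] sum.atLeast0_atMost_Suc sum.lessThan_Suc
    by (simp only: algebra_simps)
  also have "\<dots> = -8 * of_nat (Suc N) * ?B' / m ^ Suc (Suc N)"
    using binom_triple_sum_step[OF assms, of a N] by simp
  finally show ?case .
qed

lemma in_Zp_iff: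
  "in_Zp p x \<longleftrightarrow> (\<exists>u v :: int. \<not> int p dvd v \<and> x = of_int u / of_int v)"
proof
  assume "in_Zp p x"
  then show "\<exists>u v :: int. \<not> int p dvd v \<and> x = of_int u / of_int v"
    unfolding in_Zp_def by (metis prod.collapse quotient_of_div)
next
  assume "\<exists>u v :: int. \<not> int p dvd v \<and> x = of_int u / of_int v"
  then obtain u v :: int where v: "\<not> int p dvd v" and x: "x = of_int u / of_int v"
    by blast
  obtain u' v' where q: "quotient_of x = (u', v')" by (cases "quotient_of x")
  have "v \<noteq> 0" "v' > 0" "coprime u' v'" "x = of_int u' / of_int v'"
    using v quotient_of_denom_pos[OF q] quotient_of_coprime[OF q] quotient_of_div[OF q]
    by auto
  with x have "u * v' = u' * v"
    by (simp add: field_simps flip: of_int_mult of_int_eq_iff)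
  then have "v' dvd v"
    using \<open>coprime u' v'\<close> by (metis coprime_commute coprime_dvd_mult_right_iff dvd_triv_right)
  with v show "in_Zp p x"
    unfolding in_Zp_def q using dvd_trans by auto
qed

context
  fixes p :: nat
  assumes prime_p: "prime p"
begin

lemma in_Zp_of_int: "in_Zp p (of_int k)"
  unfolding in_Zp_iff using prime_p by (intro exI[of _ k] exI[of _ 1]) (auto simp: prime_gt_1_nat)

lemma in_Zp_of_nat: "in_Zp p (of_nat n)"
  using in_Zp_of_int[of "int n"] by simp

lemma in_Zp_mult:
  assumes "in_Zp p x" "in_Zp p y"
  shows "in_Zp p (x * y)"
proof -
  obtain u v u' v' :: int where "\<not> int p dvd v" "x = of_int u / of_int v"
      and "\<not> int p dvd v'" "y = of_int u' / of_int v'"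
    using assms unfolding in_Zp_iff by blast
  moreover have "prime (int p)" using prime_p by simp
  ultimately have "\<not> int p dvd v * v'" "x * y = of_int (u * u') / of_int (v * v')"
    by (simp_all add: prime_dvd_mult_iff)
  then show ?thesis unfolding in_Zp_iff by blast
qed

lemma in_Zp_add:
  assumes "in_Zp p x" "in_Zp p y"
  shows "in_Zp p (x + y)"
proof -
  obtain u v u' v' :: int where "\<not> int p dvd v" "x = of_int u / of_int v"
      and "\<not> int p dvd v'" "y = of_int u' / of_int v'"
    using assms unfolding in_Zp_iff by blast
  moreover have "prime (int p)" using prime_p by simp
  moreover have "v \<noteq> 0" "v' \<noteq> 0" using calculation by auto
  ultimately have "\<not> int p dvd v * v'" "x + y = of_int (u * v' + u' * v) / of_int (v * v')"
    by (auto simp: prime_dvd_mult_iff field_simps)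
  then show ?thesis unfolding in_Zp_iff by blast
qed

lemma in_Zp_diff:
  assumes "in_Zp p x" "in_Zp p y"
  shows "in_Zp p (x - y)"
  using in_Zp_add[OF assms(1) in_Zp_mult[OF in_Zp_of_int[of "-1"] assms(2)]] by simp

lemma in_Zp_divide_of_nat:
  assumes "in_Zp p x" "\<not> p dvd n"
  shows "in_Zp p (x / of_nat n)"
proof -
  have "in_Zp p (of_int 1 / of_int (int n))"
    unfolding in_Zp_iff using assms(2) by (intro exI[of _ 1] exI[of _ "int n"]) simp
  from in_Zp_mult[OF assms(1) this] show ?thesis by simp
qed

lemma in_Zp_inverse:
  assumes "in_Zp p x" "\<not> cong_Zp p 1 x 0"
  shows "in_Zp p (inverse x)"
proof -
  obtain u v :: int where v: "\<not> int p dvd v" and x: "x = of_int u / of_int v"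
    using assms(1) unfolding in_Zp_iff by blast
  have "\<not> int p dvd u"
  proof
    assume "int p dvd u"
    then obtain w where "u = int p * w" ..
    then have "(x - 0) / of_nat p ^ 1 = of_int w / of_int v"
      using x prime_p by (simp add: prime_gt_0_nat)
    with v assms(2) show False unfolding cong_Zp_def in_Zp_iff by metis
  qed
  moreover have "inverse x = of_int v / of_int u" using x by simp
  ultimately show ?thesis unfolding in_Zp_iff by blast
qed

lemma in_Zp_prod: "(\<And>i. i \<in> S \<Longrightarrow> in_Zp p (f i)) \<Longrightarrow> in_Zp p (prod f S)"
  by (induction S rule: infinite_finite_induct)
    (auto intro: in_Zp_mult in_Zp_of_int[of 1, simplified])

lemma in_Zp_power: "in_Zp p x \<Longrightarrow> in_Zp p (x ^ n)"
  using in_Zp_prod[of "{..<n}" "\<lambda>_. x"] by simp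

lemma in_Zp_cong_residue:
  assumes "in_Zp p a"
  obtains r where "r < p" "cong_Zp p 1 a (of_nat r)"
proof -
  obtain u v :: int where v: "\<not> int p dvd v" and a: "a = of_int u / of_int v"
    using assms unfolding in_Zp_iff by blast
  have "coprime v (int p)"
    using v prime_p prime_imp_coprime[of "int p" v] by (simp add: coprime_commute)
  then obtain w t where "w * v + t * int p = 1"
    using bezout_int[of v "int p"] by auto
  then have "int p dvd 1 - w * v" by (metis add_diff_cancel_left' dvd_triv_right)
  define r where "r = (u * w) mod int p"
  have "int p dvd u * w - r" unfolding r_def by simp
  with \<open>int p dvd 1 - w * v\<close> have "int p dvd u * (1 - w * v) + (u * w - r) * v"
    by (intro dvd_add dvd_mult dvd_mult2)
  also have "u * (1 - w * v) + (u * w - r) * v = u - r * v" by (simp add: algebra_simps)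
  finally obtain z where z: "u - r * v = int p * z" ..
  have r: "0 \<le> r" "r < int p" unfolding r_def using prime_gt_0_nat[OF prime_p] by simp_all
  have "v \<noteq> 0" using v by auto
  then have "a - of_int r = of_int (u - r * v) / of_int v" using a by (simp add: field_simps)
  also have "\<dots> = of_nat p * of_int z / of_int v" using z by simp
  finally have "(a - of_int r) / of_nat p ^ 1 = of_int z / of_int v"
    using prime_gt_0_nat[OF prime_p] by simp
  with v have "cong_Zp p 1 a (of_nat (nat r))"
    unfolding cong_Zp_def in_Zp_iff using r by auto
  with r show ?thesis using that by (metis nat_less_iff)
qed

lemma cong_Zp_zero_mult:
  "cong_Zp p i x 0 \<Longrightarrow> cong_Zp p j y 0 \<Longrightarrow> cong_Zp p (i + j) (x * y) 0"
  unfolding cong_Zp_def using in_Zp_mult[of "x / of_nat p ^ i" "y / of_nat p ^ j"]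
  by (simp add: power_add)

lemma cong_Zp_zero_mult_right: "cong_Zp p i x 0 \<Longrightarrow> in_Zp p y \<Longrightarrow> cong_Zp p i (x * y) 0"
  unfolding cong_Zp_def using in_Zp_mult[of "x / of_nat p ^ i" y] by (simp add: field_simps)

lemma cong_Zp_of_nat_zero: "p dvd n \<Longrightarrow> cong_Zp p 1 (of_nat n) 0"
  unfolding cong_Zp_def using prime_gt_0_nat[OF prime_p] in_Zp_of_nat
  by (auto elim!: dvdE)

lemma gbinomial_cong_zero:
  assumes "in_Zp p a" "cong_Zp p 1 a (of_nat r)" "r < n" "n < p"
  shows "cong_Zp p 1 (a gchoose n) 0"
proof -
  define P where "P = (\<Prod>i \<in> {0..<n} - {r}. a - of_nat i)"
  have "fact n * (a gchoose n) = (a - of_nat r) * P"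
    unfolding gbinomial_mult_fact P_def using assms(3) by (simp add: prod.remove)
  then have "(a gchoose n - 0) / of_nat p ^ 1 = (a - of_nat r) / of_nat p ^ 1 * P / of_nat (fact n)"
    by (metis (no_types) diff_zero fact_nonzero nonzero_mult_div_cancel_left of_nat_fact
        power_one_right times_divide_eq_left divide_divide_eq_right mult.commute)
  moreover have "in_Zp p ((a - of_nat r) / of_nat p ^ 1 * P / of_nat (fact n))"
  proof (intro in_Zp_divide_of_nat in_Zp_mult)
    show "in_Zp p ((a - of_nat r) / of_nat p ^ 1)" using assms(2) by (simp add: cong_Zp_def)
    show "in_Zp p P"
      unfolding P_def using assms(1) by (intro in_Zp_prod in_Zp_diff in_Zp_of_nat)
    show "\<not> p dvd fact n"
      using assms(4) prime_p by (simp add: prime_dvd_fact_iff)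
  qed
  ultimately show ?thesis unfolding cong_Zp_def by simp
qed

lemma binom_triple_cong_zero:
  assumes N: "p = Suc N" and a: "in_Zp p a" "\<not> cong_Zp p 1 a 0" "\<not> cong_Zp p 1 a (-1)"
  shows "cong_Zp p 3 (binom_triple a N) 0"
proof -
  obtain r where r: "r < p" "cong_Zp p 1 a (of_nat r)"
    using in_Zp_cong_residue[OF a(1)] .
  have p_rat: "(of_nat p :: rat) = of_nat N + 1" using N by simp
  have "r \<noteq> 0"
  proof
    assume "r = 0"
    with r a(2) show False by simp
  qed
  moreover have "r \<noteq> N"
  proof
    assume "r = N"
    then have "(a - -1) / of_nat p ^ 1 = (a - of_nat r) / of_nat p ^ 1 + 1"
      using p_rat by (simp add: field_simps)
    with r a(3) show False unfolding cong_Zp_def using in_Zp_add in_Zp_of_nat[of 1] by auto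
  qed
  ultimately have "0 < r" "r < N" using r N by auto
  have "(-1 - a - of_nat (N - r)) / of_nat p ^ 1 = - ((a - of_nat r) / of_nat p ^ 1) - 1"
    using p_rat \<open>r < N\<close> by (simp add: of_nat_diff field_simps)
  then have "cong_Zp p 1 (-1 - a) (of_nat (N - r))"
    using r(2) unfolding cong_Zp_def by (metis in_Zp_diff in_Zp_of_int of_int_0 of_int_1 diff_0)
  moreover have "in_Zp p (-1 - a)"
    using a(1) in_Zp_of_int[of "-1"] by (simp add: in_Zp_diff)
  ultimately have "cong_Zp p 1 ((-1 - a) gchoose N) 0"
    using gbinomial_cong_zero[of "-1 - a" "N - r" N] \<open>0 < r\<close> \<open>r < N\<close> N by simp
  moreover have "cong_Zp p 1 (a gchoose N) 0"
    using gbinomial_cong_zero[OF a(1) r(2) \<open>r < N\<close>] N by simp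
  moreover have "cong_Zp p 1 (of_nat (2 * N choose N)) 0"
    using N \<open>0 < r\<close> \<open>r < N\<close> by (intro cong_Zp_of_nat_zero prime_dvd_central_binomial prime_p) auto
  ultimately have "cong_Zp p (1 + 1 + 1) (binom_triple a N) 0"
    unfolding binom_triple_def by (intro cong_Zp_zero_mult)
  then show ?thesis by (simp add: numeral_3_eq_3)
qed

end

theorem theorem5p1:
  fixes p :: nat and a m :: rat
  assumes "prime p" and "odd p"
    and "in_Zp p a" and "in_Zp p m"
    and "\<not> cong_Zp p 1 m 0"
    and "\<not> cong_Zp p 1 a 0" and "\<not> cong_Zp p 1 a (-1)"
  defines "A \<equiv> (\<lambda>k::nat. (a gchoose k) * ((-1 - a) gchoose k) * of_nat ((2*k) choose k))"
  shows "cong_Zp p 3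
     (\<Sum>k=0..p-1. A k / (m ^ k * (2 * of_nat k - 1)))
     ((8 / m - 2) * (\<Sum>k=0..p-1. of_nat k * A k / m ^ k)
       - (\<Sum>k=0..p-1. A k / m ^ k)
       - 8 * a * (a + 1) / m * (\<Sum>k=0..p-2. A k / (m ^ k * (of_nat k + 1))))"
proof -
  define N where "N = p - 1"
  have N: "p = Suc N" "N \<noteq> 0"
    using prime_ge_2_nat[OF assms(1)] unfolding N_def by auto
  have m: "m \<noteq> 0"
    using assms(5) in_Zp_of_int[OF assms(1), of 0] unfolding cong_Zp_def by auto
  have A: "A = binom_triple a" by (simp add: A_def binom_triple_def fun_eq_iff)
  have bounds: "p - 1 = N" "{0..p-2} = {..<N}" using N by auto
  have "in_Zp p (of_int (-8 * int N) * inverse m ^ Suc N)"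
    using assms(1,4,5) by (intro in_Zp_mult in_Zp_of_int in_Zp_power in_Zp_inverse)
  with binom_triple_cong_zero[OF assms(1) N(1) assms(3,6,7)]
  have "cong_Zp p 3 (binom_triple a N * (of_int (-8 * int N) * inverse m ^ Suc N)) 0"
    by (rule cong_Zp_zero_mult_right[OF assms(1)])
  then show ?thesis
    unfolding cong_Zp_def A bounds binom_triple_sum_identity[OF m]
    by (simp add: divide_inverse power_inverse ac_simps)
qed

end
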